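(* Let $(G,\precsim)$ be a compatible quasi-ordered abelian group and let $H$ be a subgroup of $G$ which is convex with respect to $\precsim$. Then either $H\subseteq G^o$ or $G^o\subseteq H$; and if $G^o\subseteq H$, then $H$ is an initial segment of $G$.
   Context: A compatible quasi-ordered abelian group is an abelian group $G$ with a total quasi-order $\precsim$ (reflexive, transitive, any two elements comparable) such that, writing $a\sim b$ for $a\precsim b\wedge b\precsim a$: $(Q_1)$ $x\sim0\Rightarrow x=0$; $(Q_2)$ $x\precsim y\wedge y\not\sim z\Rightarrow x+z\precsim y+z$, for all $x,y,z$. With $cl(g)$ the $\sim$-class of $g$, $g$ is o-type if $cl(g)=\{g\}$ and $g$ is not of order $2$; $G^o$ is the set of o-type elements. $S$ is convex if $s,t\in S$, $s\precsim a\precsim t$ imply $a\in S$; $S$ is an initial segment if $s\in S$, $a\precsim s$ imply $a\in S$. *)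

theory Defs
  imports Main
begin

definition qequiv :: "('a \<Rightarrow> 'a \<Rightarrow> bool) \<Rightarrow> 'a \<Rightarrow> 'a \<Rightarrow> bool" where
  "qequiv le a b \<longleftrightarrow> le a b \<and> le b a"

definition compatible_qo_group :: "('a::ab_group_add \<Rightarrow> 'a \<Rightarrow> bool) \<Rightarrow> bool" where
  "compatible_qo_group le \<longleftrightarrow>
     (\<forall>x. le x x) \<and>
     (\<forall>x y z. le x y \<longrightarrow> le y z \<longrightarrow> le x z) \<and>
     (\<forall>x y. le x y \<or> le y x) \<and>
     (\<forall>x. qequiv le x 0 \<longrightarrow> x = 0) \<and>
     (\<forall>x y z. le x y \<and> \<not> qequiv le y z \<longrightarrow> le (x + z) (y + z))"

definition qclass :: "('a \<Rightarrow> 'a \<Rightarrow> bool) \<Rightarrow> 'a \<Rightarrow> 'a set" where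
  "qclass le g = {a. qequiv le a g}"

definition has_order_two :: "'a::ab_group_add \<Rightarrow> bool" where
  "has_order_two g \<longleftrightarrow> g \<noteq> 0 \<and> g + g = 0"

definition o_type :: "('a::ab_group_add \<Rightarrow> 'a \<Rightarrow> bool) \<Rightarrow> 'a \<Rightarrow> bool" where
  "o_type le g \<longleftrightarrow> qclass le g = {g} \<and> \<not> has_order_two g"

definition o_part :: "('a::ab_group_add \<Rightarrow> 'a \<Rightarrow> bool) \<Rightarrow> 'a set" where
  "o_part le = {g. o_type le g}"

definition is_subgroup :: "'a::ab_group_add set \<Rightarrow> bool" where
  "is_subgroup H \<longleftrightarrow> 0 \<in> H \<and> (\<forall>x\<in>H. \<forall>y\<in>H. x + y \<in> H) \<and> (\<forall>x\<in>H. - x \<in> H)"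

definition qconvex :: "('a \<Rightarrow> 'a \<Rightarrow> bool) \<Rightarrow> 'a set \<Rightarrow> bool" where
  "qconvex le S \<longleftrightarrow> (\<forall>s\<in>S. \<forall>t\<in>S. \<forall>a. le s a \<and> le a t \<longrightarrow> a \<in> S)"

definition initial_segment :: "('a \<Rightarrow> 'a \<Rightarrow> bool) \<Rightarrow> 'a set \<Rightarrow> bool" where
  "initial_segment le S \<longleftrightarrow> (\<forall>s\<in>S. \<forall>a. le a s \<longrightarrow> a \<in> S)"

end

theory Submission
  imports Defs
begin

text \<open>Non-o-type elements are nonnegative, and every o-type element lies strictly
  below every non-o-type one: if \<open>0 \<precsim> g \<precsim> h\<close> with \<open>g \<sim> -g\<close> and \<open>h\<close> of o-type, then
  translating by \<open>h\<close> squeezes \<open>g + h\<close> into the singleton class of \<open>h\<close>, forcing \<open>g = 0\<close>.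
  Hence a convex subgroup containing a non-o-type element contains the whole interval
  from \<open>0\<close> to it, in particular all nonnegative o-type elements and, by symmetry, all
  o-type elements; and once it contains all o-type elements, everything below any of its
  members is either of o-type or lies between \<open>0\<close> and that member.\<close>

locale cqo_group =
  fixes le :: "'a::ab_group_add \<Rightarrow> 'a \<Rightarrow> bool" (infix "\<precsim>" 50)
  assumes compatible: "compatible_qo_group le"
begin

abbreviation qeq :: "'a \<Rightarrow> 'a \<Rightarrow> bool" (infix "\<sim>" 50) where
  "x \<sim> y \<equiv> qequiv le x y"

lemma refl: "x \<precsim> x"
  and trans: "x \<precsim> y \<Longrightarrow> y \<precsim> z \<Longrightarrow> x \<precsim> z"
  and total: "x \<precsim> y \<or> y \<precsim> x"
  and qeq_zero: "x \<sim> 0 \<Longrightarrow> x = 0"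
  and add_right_mono: "x \<precsim> y \<Longrightarrow> \<not> y \<sim> z \<Longrightarrow> x + z \<precsim> y + z"
  using compatible unfolding compatible_qo_group_def by blast+

lemma qeq_sym: "x \<sim> y \<Longrightarrow> y \<sim> x"
  by (simp add: qequiv_def)

lemma nonneg_or_uminus_nonneg: "0 \<precsim> g \<or> 0 \<precsim> - g"
proof (cases "0 \<precsim> g")
  case False
  then have "g \<precsim> 0" using total by blast
  moreover have "\<not> 0 \<sim> - g"
    using False qeq_zero qeq_sym refl by fastforce
  ultimately have "g + - g \<precsim> 0 + - g" by (rule add_right_mono)
  then show ?thesis by simp
qed simp

lemma o_type_iff: "o_type le g \<longleftrightarrow> g = 0 \<or> \<not> g \<sim> - g"
proof
  assume o: "o_type le g"
  show "g = 0 \<or> \<not> g \<sim> - g"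
  proof (rule ccontr)
    assume "\<not> (g = 0 \<or> \<not> g \<sim> - g)"
    then have "g \<noteq> 0" "- g \<in> qclass le g" by (auto simp: qclass_def qeq_sym)
    with o have "- g = g" by (auto simp: o_type_def)
    then have "g + g = 0" by (metis add.right_inverse)
    with o \<open>g \<noteq> 0\<close> show False by (simp add: o_type_def has_order_two_def)
  qed
next
  assume g: "g = 0 \<or> \<not> g \<sim> - g"
  have "a = g" if "a \<sim> g" for a
  proof (cases "g = 0")
    case True
    then show ?thesis using that qeq_zero by simp
  next
    case False
    with g have "\<not> g \<sim> - g" by simp
    moreover from that have "\<not> a \<sim> - g"
      using calculation trans unfolding qequiv_def by blast
    ultimately have "a + - g \<precsim> g + - g" "g + - g \<precsim> a + - g"
      using that add_right_mono unfolding qequiv_def by blast+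
    then have "a - g \<sim> 0" by (simp add: qequiv_def)
    then have "a - g = 0" by (rule qeq_zero)
    then show ?thesis by simp
  qed
  then have "qclass le g = {g}" using refl by (auto simp: qclass_def qequiv_def)
  moreover have "\<not> has_order_two g"
    using g refl by (auto simp: has_order_two_def qequiv_def add_eq_0_iff)
  ultimately show "o_type le g" by (simp add: o_type_def)
qed

lemma o_type_uminus: "o_type le g \<Longrightarrow> o_type le (- g)"
  by (auto simp: o_type_iff qeq_sym)

lemma qeq_o_type_eq: "o_type le h \<Longrightarrow> g \<sim> h \<Longrightarrow> g = h"
  by (auto simp: o_type_def qclass_def)

lemma nonneg_if_not_o_type:
  assumes "\<not> o_type le g"
  shows "0 \<precsim> g"
proof -
  from assms have "g \<sim> - g" by (simp add: o_type_iff)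
  then show ?thesis
    using nonneg_or_uminus_nonneg trans unfolding qequiv_def by blast
qed

lemma o_type_less_not_o_type:
  assumes h: "o_type le h" and g: "\<not> o_type le g"
  shows "\<not> g \<precsim> h"
proof
  assume gh: "g \<precsim> h"
  have "g \<noteq> 0" and g_neg: "g \<sim> - g" using g by (auto simp: o_type_iff)
  have g_h: "\<not> g \<sim> h" using qeq_o_type_eq h g by blast
  have "\<not> - g \<sim> h"
    using g_neg g_h trans unfolding qequiv_def by blast
  from add_right_mono[OF nonneg_if_not_o_type[OF g] g_h]
  have h_gh: "h \<precsim> g + h" by simp
  have "g + h \<precsim> - g + h"
    using add_right_mono g_neg \<open>\<not> - g \<sim> h\<close> unfolding qequiv_def by blast
  moreover have "\<not> g + h \<sim> - g"
    using h_gh gh g_h g_neg trans unfolding qequiv_def by blast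
  with add_right_mono[OF h_gh, of "- g"] have "- g + h \<precsim> h"
    by (simp add: algebra_simps)
  ultimately have "g + h \<sim> h" using h_gh trans unfolding qequiv_def by blast
  with h have "g + h = h" by (rule qeq_o_type_eq)
  with \<open>g \<noteq> 0\<close> show False by simp
qed

lemma o_part_subset_if_not_o_type_mem:
  assumes H: "is_subgroup H" "qconvex le H"
    and h: "h \<in> H" "\<not> o_type le h"
  shows "o_part le \<subseteq> H"
proof
  fix g assume "g \<in> o_part le"
  then have g: "o_type le g" by (simp add: o_part_def)
  have "x \<in> H" if "o_type le x" "0 \<precsim> x" for x
  proof -
    have "x \<precsim> h" using o_type_less_not_o_type[OF that(1) h(2)] total by blast
    with H h that show ?thesis unfolding is_subgroup_def qconvex_def by blast
  qed
  with g o_type_uminus nonneg_or_uminus_nonneg H(1) show "g \<in> H"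
    unfolding is_subgroup_def by (metis minus_minus)
qed

lemma initial_segment_if_o_part_subset:
  assumes H: "is_subgroup H" "qconvex le H" and o: "o_part le \<subseteq> H"
  shows "initial_segment le H"
  unfolding initial_segment_def
proof (intro ballI allI impI)
  fix s a assume "s \<in> H" "a \<precsim> s"
  show "a \<in> H"
  proof (cases "o_type le a")
    case True
    with o show ?thesis by (auto simp: o_part_def)
  next
    case False
    then have "0 \<precsim> a" by (rule nonneg_if_not_o_type)
    with H \<open>s \<in> H\<close> \<open>a \<precsim> s\<close> show ?thesis
      unfolding is_subgroup_def qconvex_def by blast
  qed
qed

end

theorem mainTheorem8:
  fixes le :: "'a::ab_group_add \<Rightarrow> 'a \<Rightarrow> bool" and H :: "'a set"
  assumes "compatible_qo_group le"
    and "is_subgroup H"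
    and "qconvex le H"
  shows "(H \<subseteq> o_part le \<or> o_part le \<subseteq> H) \<and>
         (o_part le \<subseteq> H \<longrightarrow> initial_segment le H)"
proof -
  interpret cqo_group le by (rule cqo_group.intro) fact
  have "H \<subseteq> o_part le \<or> o_part le \<subseteq> H"
    using o_part_subset_if_not_o_type_mem[OF assms(2,3)] by (auto simp: o_part_def)
  moreover have "o_part le \<subseteq> H \<longrightarrow> initial_segment le H"
    using initial_segment_if_o_part_subset[OF assms(2,3)] by blast
  ultimately show ?thesis ..
qed

end
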